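(* The function $f:(0,\infty)\to\mathbb{R}$, $f(z)=\frac{W(z)}{1+W(z)}$ (which equals $1-T_0(-z)$ where $T_0(z)=1/(1-T(z))$ and $T(z)=\sum_{n\ge1}n^{n-1}z^n/n!$, for small $z$), is a Bernstein function.
   Context: $W$ is the principal branch of Lambert's W function: the solution of $W(z)e^{W(z)}=z$ that is real and positive for $z>0$, with $W(z)=\sum_{n\ge1}(-n)^{n-1}z^n/n!$ near $0$. A $C^\infty$ function $g:(0,\infty)\to\mathbb{R}$ is completely monotonic if $(-1)^ng^{(n)}(z)\ge0$ for all $z>0$ and $n\ge0$; $f$ is a Bernstein function if $f$ is $C^\infty$, $f(z)>0$ for all $z>0$, and $f'$ is completely monotonic. *)

theory Defs
  imports "HOL-Analysis.Analysis"
begin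

text \<open>Principal branch of Lambert's W on the positive reals: for z > 0, W z is the
unique positive real w with w * exp w = z.  (Values for z \<le> 0 are irrelevant here.)\<close>
definition lambertW :: "real \<Rightarrow> real" where
  "lambertW z = (THE w. w > 0 \<and> w * exp w = z)"

definition smooth_pos :: "(real \<Rightarrow> real) \<Rightarrow> bool" where
  "smooth_pos g \<longleftrightarrow> (\<forall>n. \<forall>z>0. ((deriv ^^ n) g) differentiable (at z))"

definition completely_monotonic :: "(real \<Rightarrow> real) \<Rightarrow> bool" where
  "completely_monotonic g \<longleftrightarrow> smooth_pos g \<and>
     (\<forall>n. \<forall>z>0. (-1) ^ n * (deriv ^^ n) g z \<ge> 0)"

definition bernstein :: "(real \<Rightarrow> real) \<Rightarrow> bool" where
  "bernstein f \<longleftrightarrow> smooth_pos f \<and> (\<forall>z>0. f z > 0) \<and> completely_monotonic (deriv f)"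

end

theory Submission
  imports Defs "HOL-Computational_Algebra.Polynomial"
begin

text \<open>Write \<open>w = W(z)\<close>. Since \<open>W' = exp(-w)/(1+w)\<close>, the derivative of
  \<open>exp(-m w) p(1/(1+w))\<close> for a real polynomial \<open>p\<close> is \<open>-exp(-(m+1) w) q(1/(1+w))\<close>
  with \<open>q = m X p + X^3 p'\<close>, and \<open>q\<close> has nonnegative coefficients whenever \<open>p\<close> has.
  As \<open>W/(1+W) = 1 - 1/(1+W)\<close> is the case \<open>m = 0\<close>, \<open>p = X\<close>, its derivative of
  order \<open>n \<ge> 1\<close> is \<open>(-1)^(n+1)\<close> times a nonnegative function.\<close>

lemma mult_exp_strict_mono: "0 < a \<Longrightarrow> a < b \<Longrightarrow> a * exp a < b * exp (b::real)"
  by (intro mult_strict_mono) auto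

lemma lambertW_mult_exp: "0 < w \<Longrightarrow> lambertW (w * exp w) = w"
  unfolding lambertW_def
proof (rule the_equality)
  fix v assume "0 < w" "0 < v \<and> v * exp v = w * exp w"
  then show "v = w"
    using mult_exp_strict_mono[of v w] mult_exp_strict_mono[of w v] by fastforce
qed auto

lemma
  assumes "0 < z"
  shows lambertW_pos: "0 < lambertW z"
    and lambertW_mult_exp_self: "lambertW z * exp (lambertW z) = z"
proof -
  have "\<exists>w. 0 \<le> w \<and> w \<le> z \<and> w * exp w = z"
  proof (rule IVT)
    have "z * 1 \<le> z * exp z" using assms by (intro mult_left_mono) auto
    then show "z \<le> z * exp z" by simp
  qed (use assms in \<open>auto intro!: continuous_intros\<close>)
  then obtain w where "0 \<le> w" "w * exp w = z" by blast
  moreover from this assms have "0 < w" by (cases "w = 0") auto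
  ultimately show "0 < lambertW z" "lambertW z * exp (lambertW z) = z"
    using lambertW_mult_exp by auto
qed

lemma isCont_lambertW:
  assumes "0 < z" shows "isCont lambertW z"
proof -
  let ?w = "lambertW z"
  have w: "0 < ?w" "?w * exp ?w = z"
    using lambertW_pos lambertW_mult_exp_self assms by auto
  have "isCont lambertW ((\<lambda>w. w * exp w) ?w)"
    by (rule isCont_inverse_function2[where a="?w/2" and b="2*?w"])
       (use w in \<open>auto intro!: lambertW_mult_exp continuous_intros\<close>)
  then show ?thesis using w by simp
qed

lemma DERIV_lambertW:
  assumes "0 < z"
  shows "(lambertW has_real_derivative exp (- lambertW z) / (1 + lambertW z)) (at z)"
proof -
  let ?w = "lambertW z"
  have w: "0 < ?w" "?w * exp ?w = z"
    using lambertW_pos lambertW_mult_exp_self assms by auto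
  have "(lambertW has_real_derivative inverse (exp ?w + ?w * exp ?w)) (at z)"
  proof (rule DERIV_inverse_function[where f="\<lambda>w. w * exp w" and a=0 and b="z+1"])
    show "((\<lambda>w. w * exp w) has_real_derivative exp ?w + ?w * exp ?w) (at ?w)"
      by (auto intro!: derivative_eq_intros)
    show "exp ?w + ?w * exp ?w \<noteq> 0"
      using w by (smt (verit) exp_gt_zero mult_pos_pos)
  qed (use assms lambertW_pos lambertW_mult_exp_self isCont_lambertW in auto)
  moreover have "inverse (exp ?w + ?w * exp ?w) = exp (- ?w) / (1 + ?w)"
    using w by (simp add: exp_minus field_simps)
  ultimately show ?thesis by simp
qed

definition nonneg_coeffs :: "real poly \<Rightarrow> bool" where
  "nonneg_coeffs p \<longleftrightarrow> (\<forall>i. 0 \<le> coeff p i)"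

lemma poly_nonneg_if_nonneg_coeffs: "nonneg_coeffs p \<Longrightarrow> 0 \<le> u \<Longrightarrow> 0 \<le> poly p u"
  unfolding nonneg_coeffs_def poly_altdef by (auto intro!: sum_nonneg)

definition lambertW_exp_poly :: "nat \<Rightarrow> real poly \<Rightarrow> real \<Rightarrow> real" where
  "lambertW_exp_poly m p z = exp (- real m * lambertW z) * poly p (1 / (1 + lambertW z))"

definition lambertW_exp_poly_step :: "nat \<Rightarrow> real poly \<Rightarrow> real poly" where
  "lambertW_exp_poly_step m p = smult (real m) (pCons 0 p) + monom 1 3 * pderiv p"

lemma DERIV_lambertW_exp_poly:
  assumes "0 < z"
  shows "(lambertW_exp_poly m p has_real_derivative
           - lambertW_exp_poly (Suc m) (lambertW_exp_poly_step m p) z) (at z)"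
proof -
  let ?w = "lambertW z"
  let ?W' = "exp (- ?w) / (1 + ?w)"
  let ?u = "1 / (1 + ?w)"
  have w: "0 < ?w" using lambertW_pos assms .
  have dW: "(lambertW has_real_derivative ?W') (at z)" using DERIV_lambertW assms .
  have dexp: "((\<lambda>z. exp (- real m * lambertW z)) has_real_derivative
               exp (- real m * ?w) * (- real m * ?W')) (at z)"
    by (auto intro!: derivative_eq_intros dW)
  have du: "((\<lambda>z. 1 / (1 + lambertW z)) has_real_derivative - ?W' / (1 + ?w)^2) (at z)"
    using w by (auto intro!: derivative_eq_intros dW simp: power2_eq_square)
  have d: "(lambertW_exp_poly m p has_real_derivative
          exp (- real m * ?w) * (- real m * ?W') * poly p ?u +
          poly (pderiv p) ?u * (- ?W' / (1 + ?w)^2) * exp (- real m * ?w)) (at z)"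
    unfolding lambertW_exp_poly_def[abs_def]
    by (rule DERIV_mult[OF dexp DERIV_chain2[OF poly_DERIV du]])
  have e: "exp (- real (Suc m) * ?w) = exp (- real m * ?w) * exp (- ?w)"
    by (simp add: algebra_simps flip: exp_add)
  have "exp (- real m * ?w) * (- real m * ?W') * poly p ?u +
          poly (pderiv p) ?u * (- ?W' / (1 + ?w)^2) * exp (- real m * ?w)
        = - lambertW_exp_poly (Suc m) (lambertW_exp_poly_step m p) z"
    unfolding lambertW_exp_poly_def lambertW_exp_poly_step_def e using w
    by (simp add: poly_monom field_simps power2_eq_square power3_eq_cube)
  with d show ?thesis by simp
qed

lemma nonneg_coeffs_lambertW_exp_poly_step:
  "nonneg_coeffs p \<Longrightarrow> nonneg_coeffs (lambertW_exp_poly_step m p)"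
  unfolding nonneg_coeffs_def lambertW_exp_poly_step_def
  by (auto simp: coeff_pCons coeff_monom_mult coeff_pderiv split: nat.split
           intro!: add_nonneg_nonneg)

lemma lambertW_exp_poly_nonneg:
  "nonneg_coeffs p \<Longrightarrow> 0 < z \<Longrightarrow> 0 \<le> lambertW_exp_poly m p z"
  unfolding lambertW_exp_poly_def
  using lambertW_pos[of z] by (auto intro!: mult_nonneg_nonneg poly_nonneg_if_nonneg_coeffs)

primrec lambertW_deriv_poly :: "nat \<Rightarrow> real poly" where
  "lambertW_deriv_poly 0 = [:0, 1:]"
| "lambertW_deriv_poly (Suc n) = lambertW_exp_poly_step n (lambertW_deriv_poly n)"

lemma nonneg_coeffs_lambertW_deriv_poly: "nonneg_coeffs (lambertW_deriv_poly n)"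
proof (induction n)
  case 0
  then show ?case by (simp add: nonneg_coeffs_def coeff_pCons split: nat.split)
next
  case (Suc n)
  then show ?case by (simp add: nonneg_coeffs_lambertW_exp_poly_step)
qed

lemma DERIV_lambertW_deriv_poly:
  "0 < z \<Longrightarrow> ((\<lambda>z. (-1) ^ n * lambertW_exp_poly n (lambertW_deriv_poly n) z)
     has_real_derivative (-1) ^ Suc n * lambertW_exp_poly (Suc n) (lambertW_deriv_poly (Suc n)) z) (at z)"
  using DERIV_cmult[OF DERIV_lambertW_exp_poly[of z n "lambertW_deriv_poly n"], of "(-1) ^ n"]
  by simp

lemma deriv_funpow_eq_on_pos:
  assumes G: "\<And>n z. 0 < z \<Longrightarrow> (G n has_real_derivative G (Suc n) z) (at z)"
    and g: "\<And>z. 0 < z \<Longrightarrow> g z = G 0 z"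
  shows "0 < z \<Longrightarrow> (deriv ^^ n) g z = G n z"
proof (induction n arbitrary: z)
  case 0
  then show ?case using g by simp
next
  case (Suc n)
  have "\<forall>\<^sub>F x in nhds z. (deriv ^^ n) g x = G n x"
    using eventually_nhds_in_open[of "{0<..}" z] Suc by (auto elim!: eventually_mono)
  then have "deriv ((deriv ^^ n) g) z = deriv (G n) z" by (rule deriv_cong_ev) simp
  also have "\<dots> = G (Suc n) z" using G[OF Suc.prems] by (rule DERIV_imp_deriv)
  finally show ?case by simp
qed

lemma smooth_pos_if_derivative_sequence:
  assumes G: "\<And>n z. 0 < z \<Longrightarrow> (G n has_real_derivative G (Suc n) z) (at z)"
    and g: "\<And>z. 0 < z \<Longrightarrow> g z = G 0 z"
  shows "smooth_pos g"
  unfolding smooth_pos_def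
proof (intro allI impI)
  fix n and z :: real assume z: "0 < z"
  have "((deriv ^^ n) g has_real_derivative G (Suc n) z) (at z)"
    by (rule has_field_derivative_transform_within_open[OF G[OF z], of "{0<..}"])
       (use z deriv_funpow_eq_on_pos[OF G g] in auto)
  then show "(deriv ^^ n) g differentiable (at z)"
    using real_differentiable_def by blast
qed

lemma smooth_pos_deriv: "smooth_pos g \<Longrightarrow> smooth_pos (deriv g)"
  unfolding smooth_pos_def by (metis funpow_Suc_right o_apply)

theorem mainTheorem10:
  shows "bernstein (\<lambda>z. lambertW z / (1 + lambertW z))"
proof -
  let ?f = "\<lambda>z. lambertW z / (1 + lambertW z)"
  define D where "D n z = (-1) ^ n * lambertW_exp_poly n (lambertW_deriv_poly n) z" for n z
  define G where "G n z = (if n = 0 then 1 else 0) - D n z" for n z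
  have G: "(G n has_real_derivative G (Suc n) z) (at z)" if "0 < z" for n z
  proof -
    have "(D n has_real_derivative D (Suc n) z) (at z)"
      using DERIV_lambertW_deriv_poly[OF that] by (simp add: D_def[abs_def])
    from DERIV_diff[OF DERIV_const this] show ?thesis by (simp add: G_def[abs_def])
  qed
  have f: "?f z = G 0 z" if "0 < z" for z
    using lambertW_pos[OF that]
    by (simp add: G_def D_def lambertW_exp_poly_def field_simps)
  have "(-1) ^ n * (deriv ^^ n) (deriv ?f) z \<ge> 0" if "0 < z" for n z
  proof -
    have "(deriv ^^ n) (deriv ?f) z = G (Suc n) z"
      using deriv_funpow_eq_on_pos[OF G f that, of "Suc n"]
      by (simp del: funpow.simps add: funpow_Suc_right)
    then show ?thesis
      using lambertW_exp_poly_nonneg[OF nonneg_coeffs_lambertW_deriv_poly that]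
      by (simp add: G_def D_def del: lambertW_deriv_poly.simps)
  qed
  moreover have "smooth_pos ?f"
    using smooth_pos_if_derivative_sequence[OF G f] .
  moreover have "?f z > 0" if "0 < z" for z
    using lambertW_pos[OF that] by simp
  ultimately show ?thesis
    unfolding bernstein_def completely_monotonic_def using smooth_pos_deriv by blast
qed

end
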